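(* Let $R$ be a root system in $\mathbb{R}^N$, let $R'=\{\alpha_1,\dots,\alpha_n\}$ be a positive orthogonal subsystem of $R$ consisting of $n$ vectors, and let $\kappa=(\kappa_1,\dots,\kappa_n)\in\mathbb{C}^n$ with $\operatorname{Re}\kappa_j>0$ for all $j$. For $\xi\in\mathbb{R}^N$ let $$(T_\xi f)(x)=\partial_\xi f(x)+\sum_{j=1}^n\kappa_j\langle\alpha_j,\xi\rangle\frac{f(x)-f(\tau_{\alpha_j}x)}{\langle x,\alpha_j\rangle},\qquad \tau_{\alpha_j}(x)=x-\frac{\langle x,\alpha_j\rangle}{|\alpha_j|^2}\alpha_j.$$ Define $h:\mathbb{R}^n\times\mathbb{R}^N\to\mathbb{R}^N$ by $h(t,x)=x+\sum_{j=1}^n(t_j-1)\frac{\langle x,\alpha_j\rangle}{|\alpha_j|^2}\alpha_j$, and for $f\in C^\infty(\mathbb{R}^N)$ $$\chi_\kappa(f)(x)=\frac{1}{\Gamma(\kappa)}\int_{[0,1]^n}f(h(t,x))\,w(t)\,dt,\qquad w(t)=\prod_{j=1}^n(1-t_j)^{\kappa_j-1},\quad \Gamma(\kappa)=\prod_{j=1}^n\Gamma(\kappa_j).$$ Then for every $f\in C^\infty(\mathbb{R}^N)$ and $\xi\in\mathbb{R}^N$, $$T_\xi(\chi_\kappa f)(x)=\chi_\kappa(\partial_\xi f)(x)$$ for all $x\in\mathbb{R}^N$ with $\langle x,\alpha_j\rangle\neq0$ for $j=1,\dots,n$.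
   Context: $\langle\cdot,\cdot\rangle$ is the Euclidean inner product, $|x|=\sqrt{\langle x,x\rangle}$, $\partial_\xi$ is the directional derivative. A root system is a finite set $R\subset\mathbb{R}^N\setminus\{0\}$ with $s_\alpha(R)=R$ and $R\cap\mathbb{R}\alpha=\{\pm\alpha\}$ for all $\alpha\in R$, where $s_\alpha(x)=x-2\frac{\langle x,\alpha\rangle}{|\alpha|^2}\alpha$. A subsystem of $R$ is a subset closed under negation and under sums that lie in $R$; it is orthogonal if its roots are pairwise orthogonal (apart from $\pm$ pairs); a positive orthogonal subsystem $R'$ is a subset of an orthogonal subsystem $R''$ with $R''=R'\cup(-R')$, $R'\cap(-R')=\emptyset$. In particular $\alpha_1,\dots,\alpha_n$ are pairwise orthogonal. *)

theory Defs
  imports "HOL-Analysis.Analysis"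
begin

definition reflection :: "'a::real_inner \<Rightarrow> 'a \<Rightarrow> 'a" where
  "reflection \<alpha> x = x - (2 * inner x \<alpha> / (norm \<alpha>)\<^sup>2) *\<^sub>R \<alpha>"

definition root_system :: "'a::real_inner set \<Rightarrow> bool" where
  "root_system R \<longleftrightarrow> finite R \<and> 0 \<notin> R \<and>
     (\<forall>\<alpha>\<in>R. reflection \<alpha> ` R = R) \<and>
     (\<forall>\<alpha>\<in>R. \<forall>c::real. c *\<^sub>R \<alpha> \<in> R \<longleftrightarrow> (c = 1 \<or> c = -1))"

definition subsystem :: "'a::real_inner set \<Rightarrow> 'a set \<Rightarrow> bool" where
  "subsystem S R \<longleftrightarrow> S \<subseteq> R \<and> (\<forall>\<alpha>\<in>S. - \<alpha> \<in> S) \<and>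
     (\<forall>\<alpha>\<in>S. \<forall>\<beta>\<in>S. \<alpha> + \<beta> \<in> R \<longrightarrow> \<alpha> + \<beta> \<in> S)"

definition orthogonal_subsystem :: "'a::real_inner set \<Rightarrow> 'a set \<Rightarrow> bool" where
  "orthogonal_subsystem S R \<longleftrightarrow> subsystem S R \<and>
     (\<forall>\<alpha>\<in>S. \<forall>\<beta>\<in>S. \<beta> \<noteq> \<alpha> \<and> \<beta> \<noteq> - \<alpha> \<longrightarrow> inner \<alpha> \<beta> = 0)"

definition positive_orthogonal_subsystem :: "'a::real_inner set \<Rightarrow> 'a set \<Rightarrow> bool" where
  "positive_orthogonal_subsystem S R \<longleftrightarrow>
     (\<exists>S''. orthogonal_subsystem S'' R \<and> S'' = S \<union> uminus ` S \<and> S \<inter> uminus ` S = {})"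

definition has_dir_deriv :: "('a::real_normed_vector \<Rightarrow> complex) \<Rightarrow> 'a \<Rightarrow> 'a \<Rightarrow> complex \<Rightarrow> bool" where
  "has_dir_deriv g \<xi> x D \<longleftrightarrow> ((\<lambda>s::real. g (x + s *\<^sub>R \<xi>)) has_vector_derivative D) (at 0)"

definition dir_deriv :: "('a::real_normed_vector \<Rightarrow> complex) \<Rightarrow> 'a \<Rightarrow> 'a \<Rightarrow> complex" where
  "dir_deriv g \<xi> x = vector_derivative (\<lambda>s::real. g (x + s *\<^sub>R \<xi>)) (at 0)"

fun C_k :: "nat \<Rightarrow> ('a::real_normed_vector \<Rightarrow> complex) \<Rightarrow> bool" where
  "C_k 0 f = continuous_on UNIV f"
| "C_k (Suc k) f = (f differentiable_on UNIV \<and> (\<forall>v. C_k k (\<lambda>x. frechet_derivative f (at x) v)))"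

definition smooth :: "('a::real_normed_vector \<Rightarrow> complex) \<Rightarrow> bool" where
  "smooth f \<longleftrightarrow> (\<forall>k. C_k k f)"

definition tau :: "'a::real_inner \<Rightarrow> 'a \<Rightarrow> 'a" where
  "tau \<alpha> x = x - (inner x \<alpha> / (norm \<alpha>)\<^sup>2) *\<^sub>R \<alpha>"

definition Dunkl_T :: "('n::finite \<Rightarrow> complex) \<Rightarrow> ('n \<Rightarrow> 'a::real_inner) \<Rightarrow> 'a
    \<Rightarrow> ('a \<Rightarrow> complex) \<Rightarrow> 'a \<Rightarrow> complex \<Rightarrow> complex" where
  "Dunkl_T \<kappa> \<alpha> \<xi> g x D = D + (\<Sum>j\<in>UNIV. \<kappa> j * of_real (inner (\<alpha> j) \<xi>) *
       (g x - g (tau (\<alpha> j) x)) / of_real (inner x (\<alpha> j)))"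

definition hmap :: "('n::finite \<Rightarrow> 'a::real_inner) \<Rightarrow> real^'n \<Rightarrow> 'a \<Rightarrow> 'a" where
  "hmap \<alpha> t x = x + (\<Sum>j\<in>UNIV. ((t $ j - 1) * inner x (\<alpha> j) / (norm (\<alpha> j))\<^sup>2) *\<^sub>R \<alpha> j)"

definition weight :: "('n::finite \<Rightarrow> complex) \<Rightarrow> real^'n \<Rightarrow> complex" where
  "weight \<kappa> t = (\<Prod>j\<in>UNIV. (of_real (1 - t $ j)) powr (\<kappa> j - 1))"

definition chi :: "('n::finite \<Rightarrow> complex) \<Rightarrow> ('n \<Rightarrow> 'a::real_inner)
    \<Rightarrow> ('a \<Rightarrow> complex) \<Rightarrow> 'a \<Rightarrow> complex" where
  "chi \<kappa> \<alpha> f x = (1 / (\<Prod>j\<in>UNIV. Gamma (\<kappa> j))) *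
     integral (cbox (0::real^'n) 1) (\<lambda>t. f (hmap \<alpha> t x) * weight \<kappa> t)"

end

theory Submission
  imports Defs
begin

text \<open>Differentiating under the integral sign, \<partial>\<xi> \<chi> f (x) is \<chi> applied to
  t \<mapsto> Df(h(t,x)) h(t,\<xi>), and h(t,\<xi>) = \<xi> - \<Sum>j (1 - tj) \<langle>\<xi>,\<alpha>j\<rangle>/|\<alpha>j|^2 \<alpha>j. The \<xi>-term gives
  \<chi>(\<partial>\<xi> f)(x). Each other term is integrated by parts in tj, using
  d/dtj (1 - tj)^\<kappa>j = -\<kappa>j (1 - tj)^(\<kappa>j - 1): by orthogonality, h(t,x) at tj = 0 is h(t, \<tau>\<alpha>j x),
  so the term equals -\<kappa>j \<langle>\<alpha>j,\<xi>\<rangle> (\<chi> f(x) - \<chi> f(\<tau>\<alpha>j x)) / \<langle>x,\<alpha>j\<rangle> and cancels the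
  difference part of T\<xi>.\<close>

text \<open>\<open>weight_factor k r\<close> is \<open>(1 - r) powr (k - 1)\<close> on \<open>r \<le> 1\<close>, written so that it is evidently
  Borel measurable; \<open>cube_weight\<close> agrees with \<open>weight\<close> on the unit cube.\<close>

definition weight_factor :: "complex \<Rightarrow> real \<Rightarrow> complex" where
  "weight_factor k r = (if r < 1 then exp ((k - 1) * of_real (ln (1 - r))) else 0)"

definition cube_weight :: "('n::finite \<Rightarrow> complex) \<Rightarrow> real^'n \<Rightarrow> complex" where
  "cube_weight \<kappa> t = (\<Prod>j\<in>UNIV. weight_factor (\<kappa> j) (t $ j))"

lemma powr_eq_weight_factor:
  assumes "r \<le> 1"
  shows "(of_real (1 - r) :: complex) powr (k - 1) = weight_factor k r"
proof (cases "r = 1")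
  case False
  with assms have "Ln (of_real (1 - r)) = of_real (ln (1 - r))"
    using Ln_of_real[of "1 - r"] by simp
  with False assms show ?thesis by (simp add: powr_def weight_factor_def)
qed (simp add: weight_factor_def)

lemma powr_eq_mult_weight_factor:
  assumes "r < 1"
  shows "(of_real (1 - r) :: complex) powr k = of_real (1 - r) * weight_factor k r"
proof -
  have "(of_real (1 - r) :: complex) powr k = of_real (1 - r) powr (1 + (k - 1))"
    by simp
  also have "\<dots> = of_real (1 - r) powr 1 * of_real (1 - r) powr (k - 1)"
    by (rule powr_add)
  finally show ?thesis
    using assms powr_eq_weight_factor[of r k] by simp
qed

lemma weight_eq_cube_weight: "t \<in> cbox 0 1 \<Longrightarrow> weight \<kappa> t = cube_weight \<kappa> t"
  unfolding weight_def cube_weight_def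
  by (intro prod.cong refl powr_eq_weight_factor) (auto simp: mem_box_cart)

lemma norm_weight_factor:
  "0 \<le> r \<Longrightarrow> r \<le> 1 \<Longrightarrow> norm (weight_factor k r) = (1 - r) powr (Re k - 1)"
  by (auto simp: weight_factor_def powr_def)

lemma borel_measurable_weight_factor [measurable]: "weight_factor k \<in> borel_measurable borel"
  unfolding weight_factor_def by measurable

lemma borel_measurable_cube_weight [measurable]: "cube_weight \<kappa> \<in> borel_measurable borel"
  unfolding cube_weight_def by measurable

lemma has_integral_one_minus_powr:
  fixes a :: real
  assumes "a > 0"
  shows "((\<lambda>r. (1 - r) powr (a - 1)) has_integral 1 / a) {0..1}"
proof -
  define F where "F r = - ((1 - r) powr a / a)" for r
  have "((\<lambda>r. (1 - r) powr (a - 1)) has_integral F 1 - F 0) {0..1}"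
  proof (rule fundamental_theorem_of_calculus_interior)
    show "continuous_on {0..1} F"
      unfolding F_def using assms by (intro continuous_intros continuous_on_powr') auto
    fix r :: real
    assume r: "r \<in> {0<..<1}"
    have "((\<lambda>r. (1 - r) powr a) has_real_derivative a * (1 - r) powr (a - 1) * (-1)) (at r)"
      using r by (intro DERIV_fun_powr[of "\<lambda>r. 1 - r", simplified] derivative_eq_intros) auto
    then have "(F has_real_derivative (1 - r) powr (a - 1)) (at r)"
      unfolding F_def using assms r by (auto intro!: derivative_eq_intros)
    then show "(F has_vector_derivative (1 - r) powr (a - 1)) (at r)"
      by (simp add: has_real_derivative_iff_has_vector_derivative)
  qed simp
  then show ?thesis
    using assms by (simp add: F_def)
qed

lemma Basis_vec_eq_range_axis: "(Basis :: (real^'n) set) = range (\<lambda>j. axis j 1)"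
  unfolding Basis_vec_def Basis_real_def by auto

lemma prod_Basis_vec:
  fixes H :: "'n::finite \<Rightarrow> real \<Rightarrow> 'b::comm_monoid_mult"
  shows "(\<Prod>b\<in>(Basis::(real^'n) set). H (SOME j. b = axis j 1) (t \<bullet> b)) = (\<Prod>j\<in>UNIV. H j (t $ j))"
proof -
  have "inj (\<lambda>j::'n. axis j (1::real))"
    by (auto simp: inj_def axis_eq_axis)
  then show ?thesis
    unfolding Basis_vec_eq_range_axis
    by (subst prod.reindex) (simp_all add: inner_axis axis_eq_axis)
qed

lemma integrable_cube_weight:
  fixes \<kappa> :: "'n::finite \<Rightarrow> complex"
  assumes pos: "\<And>j. Re (\<kappa> j) > 0"
  shows "integrable lborel (\<lambda>t::real^'n. indicator (cbox 0 1) t *\<^sub>R cube_weight \<kappa> t)"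
proof (rule integrableI_bounded)
  define H where "H j r = indicator {0..1::real} r * (1 - r) powr (Re (\<kappa> j) - 1)" for j r
  have norm_eq: "norm (indicator (cbox 0 1) t *\<^sub>R cube_weight \<kappa> t) = (\<Prod>j\<in>UNIV. H j (t $ j))"
    for t :: "real^'n"
  proof (cases "t \<in> cbox 0 1")
    case True
    then show ?thesis
      by (auto simp: cube_weight_def H_def mem_box_cart norm_weight_factor
               simp flip: prod_norm intro!: prod.cong)
  next
    case False
    then obtain j where "t $ j \<notin> {0..1}"
      by (auto simp: mem_box_cart)
    then have "H j (t $ j) = 0"
      by (simp add: H_def)
    with False show ?thesis
      by (metis UNIV_I finite indicator_simps(2) norm_zero prod_zero scale_zero_left)
  qed
  have "(\<integral>\<^sup>+ t. ennreal (norm (indicator (cbox 0 1) t *\<^sub>R cube_weight \<kappa> t)) \<partial>lborel)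
      = (\<integral>\<^sup>+ t. (\<Prod>b\<in>(Basis::(real^'n) set). ennreal (H (SOME j. b = axis j 1) (t \<bullet> b))) \<partial>lborel)"
    unfolding norm_eq prod_Basis_vec[symmetric, of H]
    by (intro nn_integral_cong prod_ennreal[symmetric]) (auto simp: H_def)
  also have "\<dots> = (\<Prod>b\<in>(Basis::(real^'n) set). \<integral>\<^sup>+ r. ennreal (H (SOME j. b = axis j 1) r) \<partial>lborel)"
    by (rule nn_integral_lborel_prod) (auto simp: H_def)
  also have "\<dots> = (\<Prod>b\<in>(Basis::(real^'n) set). ennreal (1 / Re (\<kappa> (SOME j. b = axis j 1))))"
    unfolding H_def
    by (intro prod.cong refl nn_integral_has_integral_lebesgue has_integral_one_minus_powr pos) auto
  also have "\<dots> < \<infinity>"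
    by (simp add: less_top[symmetric] ennreal_prod_eq_top)
  finally show "(\<integral>\<^sup>+ t. ennreal (norm (indicator (cbox 0 1) t *\<^sub>R cube_weight \<kappa> t)) \<partial>lborel) < \<infinity>" .
qed measurable

lemma integrable_cube_weighted:
  fixes \<kappa> :: "'n::finite \<Rightarrow> complex" and g :: "real^'n \<Rightarrow> complex"
  assumes pos: "\<And>j. Re (\<kappa> j) > 0" and g: "continuous_on UNIV g"
  shows "integrable lborel (\<lambda>t. indicator (cbox 0 1) t *\<^sub>R (g t * cube_weight \<kappa> t))"
proof -
  have "compact (g ` cbox 0 1)"
    by (intro compact_continuous_image continuous_on_subset[OF g]) auto
  then obtain B where B: "B > 0" "\<And>t. t \<in> cbox 0 1 \<Longrightarrow> norm (g t) \<le> B"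
    by (metis compact_imp_bounded bounded_pos image_eqI)
  show ?thesis
  proof (rule Bochner_Integration.integrable_bound)
    show "integrable lborel (\<lambda>t. B *\<^sub>R (indicator (cbox 0 1) t *\<^sub>R cube_weight \<kappa> t))"
      using integrable_cube_weight[OF pos] by (rule integrable_scaleR_right)
    show "(\<lambda>t. indicator (cbox 0 1) t *\<^sub>R (g t * cube_weight \<kappa> t)) \<in> borel_measurable lborel"
      using borel_measurable_continuous_onI[OF g] by measurable
    show "AE t in lborel. norm (indicator (cbox 0 1) t *\<^sub>R (g t * cube_weight \<kappa> t))
           \<le> norm (B *\<^sub>R (indicator (cbox 0 1) t *\<^sub>R cube_weight \<kappa> t))"
      using B by (intro AE_I2) (auto simp: norm_mult indicator_def intro!: mult_right_mono)
  qed
qed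

definition cube_integral :: "('n::finite \<Rightarrow> complex) \<Rightarrow> (real^'n \<Rightarrow> complex) \<Rightarrow> complex" where
  "cube_integral \<kappa> g = (LINT t|lborel. indicator (cbox 0 1) t *\<^sub>R (g t * cube_weight \<kappa> t))"

lemma integral_weight_eq_cube_integral:
  fixes \<kappa> :: "'n::finite \<Rightarrow> complex" and g :: "real^'n \<Rightarrow> complex"
  assumes pos: "\<And>j. Re (\<kappa> j) > 0" and g: "continuous_on UNIV g"
  shows "integral (cbox 0 1) (\<lambda>t. g t * weight \<kappa> t) = cube_integral \<kappa> g"
proof -
  have "integral (cbox 0 1) (\<lambda>t. g t * weight \<kappa> t) = integral (cbox 0 1) (\<lambda>t. g t * cube_weight \<kappa> t)"
    by (intro integral_cong) (simp add: weight_eq_cube_weight)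
  also have "\<dots> = cube_integral \<kappa> g"
    using set_borel_integral_eq_integral(2)[of "cbox 0 1" "\<lambda>t. g t * cube_weight \<kappa> t"]
      integrable_cube_weighted[OF pos g]
    by (simp add: set_integrable_def set_lebesgue_integral_def cube_integral_def)
  finally show ?thesis .
qed

lemma cube_integral_cmult: "cube_integral \<kappa> (\<lambda>t. c * g t) = c * cube_integral \<kappa> g"
  unfolding cube_integral_def scaleR_conv_of_real mult.assoc mult.left_commute[of _ c]
  by (rule integral_mult_right_zero)

lemma cube_integral_diff:
  assumes "\<And>j. Re (\<kappa> j) > 0" "continuous_on UNIV g1" "continuous_on UNIV g2"
  shows "cube_integral \<kappa> (\<lambda>t. g1 t - g2 t) = cube_integral \<kappa> g1 - cube_integral \<kappa> g2"
  using integrable_cube_weighted[OF assms(1,2)] integrable_cube_weighted[OF assms(1,3)]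
  by (simp add: cube_integral_def algebra_simps)

lemma cube_integral_sum:
  assumes pos: "\<And>j. Re (\<kappa> j) > 0" and g: "\<And>i. i \<in> S \<Longrightarrow> continuous_on UNIV (g i)"
  shows "cube_integral \<kappa> (\<lambda>t. \<Sum>i\<in>S. g i t) = (\<Sum>i\<in>S. cube_integral \<kappa> (g i))"
  using integrable_cube_weighted[OF pos g]
  by (simp add: cube_integral_def sum_distrib_right scaleR_sum_right)

lemma norm_cube_integral_le:
  fixes \<kappa> :: "'n::finite \<Rightarrow> complex" and g :: "real^'n \<Rightarrow> complex"
  assumes pos: "\<And>j. Re (\<kappa> j) > 0" and g: "continuous_on UNIV g"
    and B: "\<And>t. t \<in> cbox 0 1 \<Longrightarrow> norm (g t) \<le> B"
  shows "norm (cube_integral \<kappa> g)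
           \<le> B * (LINT t|lborel. norm (indicator (cbox 0 1) t *\<^sub>R cube_weight \<kappa> t))"
proof -
  have "norm (cube_integral \<kappa> g)
      \<le> (LINT t|lborel. norm (indicator (cbox 0 1) t *\<^sub>R (g t * cube_weight \<kappa> t)))"
    unfolding cube_integral_def by (rule integral_norm_bound)
  also have "\<dots> \<le> (LINT t|lborel. B * norm (indicator (cbox 0 1) t *\<^sub>R cube_weight \<kappa> t))"
    using integrable_cube_weighted[OF pos g] integrable_cube_weight[OF pos] B
    by (intro integral_mono integrable_mult_right integrable_norm)
       (auto simp: norm_mult indicator_def intro!: mult_right_mono)
  finally show ?thesis
    by simp
qed

lemma continuous_on_frechet_derivative_comp:
  fixes f :: "'a::euclidean_space \<Rightarrow> 'c::real_normed_vector"
  assumes df: "\<And>y. f differentiable (at y)"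
    and cd: "\<And>w. continuous_on UNIV (\<lambda>y. frechet_derivative f (at y) w)"
    and a: "continuous_on S a" and b: "continuous_on S b"
  shows "continuous_on S (\<lambda>z. frechet_derivative f (at (a z)) (b z))"
proof -
  have "frechet_derivative f (at (a z)) (b z)
      = (\<Sum>i\<in>Basis. (b z \<bullet> i) *\<^sub>R frechet_derivative f (at (a z)) i)" for z
    using linear_frechet_derivative[OF df]
    by (subst euclidean_representation[symmetric, of "b z"]) (simp add: linear_sum linear_scale)
  moreover have "continuous_on S (\<lambda>z. frechet_derivative f (at (a z)) i)" for i
    using continuous_on_compose2[OF cd[of i] a] by simp
  ultimately show ?thesis
    by (simp only:) (intro continuous_intros b)
qed

lemma has_vector_derivative_along_line:
  fixes f :: "'a::real_normed_vector \<Rightarrow> 'c::real_normed_vector"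
  assumes "f differentiable (at (A + r *\<^sub>R e))"
  shows "((\<lambda>s. f (A + s *\<^sub>R e)) has_vector_derivative frechet_derivative f (at (A + r *\<^sub>R e)) e) (at r)"
proof -
  have "((\<lambda>s. f (A + s *\<^sub>R e)) has_derivative
          (\<lambda>s. frechet_derivative f (at (A + r *\<^sub>R e)) (s *\<^sub>R e))) (at r)"
    using assms unfolding frechet_derivative_works
    by (rule diff_chain_at[unfolded o_def, rotated]) (auto intro!: derivative_eq_intros)
  then show ?thesis
    unfolding has_vector_derivative_def
    by (simp add: linear_scale[OF linear_frechet_derivative[OF assms]])
qed

lemma dir_deriv_eq_frechet_derivative:
  "f differentiable (at y) \<Longrightarrow> dir_deriv f \<xi> y = frechet_derivative f (at y) \<xi>"
  unfolding dir_deriv_def using has_vector_derivative_along_line[of f y 0 \<xi>]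
  by (simp add: vector_derivative_at)

text \<open>Uniformity in \<open>t\<close> comes from the uniform continuity of the derivative along the lines on
  the compact set \<open>K \<times> [-1, 1]\<close>.\<close>

lemma uniform_linearization:
  fixes f :: "'a::euclidean_space \<Rightarrow> 'c::real_normed_vector" and p v :: "'b::metric_space \<Rightarrow> 'a"
  assumes df: "\<And>y. f differentiable (at y)"
    and cd: "\<And>w. continuous_on UNIV (\<lambda>y. frechet_derivative f (at y) w)"
    and p: "continuous_on UNIV p" and v: "continuous_on UNIV v"
    and K: "compact K" and e: "e > 0"
  obtains d where "d > 0" and "\<And>h t. \<bar>h\<bar> < d \<Longrightarrow> t \<in> K \<Longrightarrow>
     norm (f (p t + h *\<^sub>R v t) - f (p t) - h *\<^sub>R frechet_derivative f (at (p t)) (v t)) \<le> e * \<bar>h\<bar>"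
proof -
  define G where "G z = frechet_derivative f (at (p (fst z) + snd z *\<^sub>R v (fst z))) (v (fst z))"
    for z :: "'b \<times> real"
  have pf: "continuous_on UNIV (\<lambda>z::'b \<times> real. p (fst z))"
    by (rule continuous_on_compose2[OF p continuous_on_fst[OF continuous_on_id]]) auto
  have vf: "continuous_on UNIV (\<lambda>z::'b \<times> real. v (fst z))"
    by (rule continuous_on_compose2[OF v continuous_on_fst[OF continuous_on_id]]) auto
  have G: "continuous_on UNIV G"
    unfolding G_def
    by (rule continuous_on_frechet_derivative_comp[OF df cd]) (intro continuous_intros pf vf)+
  have "uniformly_continuous_on (K \<times> {-1..1}) G"
    by (intro compact_uniformly_continuous compact_Times K compact_Icc continuous_on_subset[OF G]) simp
  then obtain d where d: "d > 0"
    and dG: "\<And>z z'. z \<in> K \<times> {-1..1} \<Longrightarrow> z' \<in> K \<times> {-1..1} \<Longrightarrow> dist z' z < d \<Longrightarrow> dist (G z') (G z) < e"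
    unfolding uniformly_continuous_on_def using e by metis
  show ?thesis
  proof (rule that[of "min d 1"])
    fix h :: real and t
    assume h: "\<bar>h\<bar> < min d 1" and t: "t \<in> K"
    define S where "S = {-\<bar>h\<bar>..\<bar>h\<bar>}"
    have "norm (f (p t + h *\<^sub>R v t) - f (p t + 0 *\<^sub>R v t) - (h - 0) *\<^sub>R G (t, 0)) \<le> norm (h - 0) * e"
    proof (rule differentiable_bound_linearization[where f' = "\<lambda>r i. i *\<^sub>R G (t, r)" and S = S])
      show "0 + s *\<^sub>R (h - 0) \<in> S" if "s \<in> {0..1}" for s
      proof -
        have "\<bar>s * h\<bar> \<le> \<bar>h\<bar>"
          using that by (simp add: abs_mult mult_left_le_one_le)
        then show ?thesis
          by (simp add: S_def abs_le_iff)
      qed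
      fix r
      assume r: "r \<in> S"
      show "((\<lambda>r. f (p t + r *\<^sub>R v t)) has_derivative (\<lambda>i. i *\<^sub>R G (t, r))) (at r within S)"
        using has_vector_derivative_along_line[of f "p t" r "v t"] df
        by (auto simp: G_def has_vector_derivative_def intro: has_derivative_at_withinI)
      have "(t, r) \<in> K \<times> {-1..1}" "dist (t, r) (t, 0) < d"
        using t r h by (auto simp: S_def dist_Pair_Pair dist_real_def)
      then have "norm (G (t, r) - G (t, 0)) \<le> e"
        using dG[of "(t, 0)" "(t, r)"] t by (simp add: dist_norm)
      moreover have "(\<lambda>i. i *\<^sub>R G (t, r)) - (\<lambda>i. i *\<^sub>R G (t, 0)) = (\<lambda>i. i *\<^sub>R (G (t, r) - G (t, 0)))"
        by (auto simp: fun_eq_iff algebra_simps)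
      ultimately show "onorm ((\<lambda>i. i *\<^sub>R G (t, r)) - (\<lambda>i. i *\<^sub>R G (t, 0))) \<le> e"
        using onorm_scaleR_left[of "\<lambda>i::real. i" "G (t, r) - G (t, 0)"] by (simp add: onorm_id)
    qed (simp add: S_def)
    then show "norm (f (p t + h *\<^sub>R v t) - f (p t) - h *\<^sub>R frechet_derivative f (at (p t)) (v t)) \<le> e * \<bar>h\<bar>"
      by (simp add: G_def mult.commute)
  qed (use d in simp)
qed

lemma has_vector_derivative_cube_integral:
  fixes f :: "'a::euclidean_space \<Rightarrow> complex" and p v :: "real^'n::finite \<Rightarrow> 'a"
    and \<kappa> :: "'n \<Rightarrow> complex"
  assumes pos: "\<And>j. Re (\<kappa> j) > 0"
    and df: "\<And>y. f differentiable (at y)"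
    and cd: "\<And>w. continuous_on UNIV (\<lambda>y. frechet_derivative f (at y) w)"
    and p: "continuous_on UNIV p" and v: "continuous_on UNIV v"
  shows "((\<lambda>s. cube_integral \<kappa> (\<lambda>t. f (p t + s *\<^sub>R v t))) has_vector_derivative
            cube_integral \<kappa> (\<lambda>t. frechet_derivative f (at (p t)) (v t))) (at 0)"
proof -
  define Df where "Df t = frechet_derivative f (at (p t)) (v t)" for t
  define Q where "Q s = cube_integral \<kappa> (\<lambda>t. f (p t + s *\<^sub>R v t))" for s
  define C where "C = (LINT t|lborel. norm (indicator (cbox 0 1) t *\<^sub>R cube_weight \<kappa> t))"
  have "C \<ge> 0"
    by (simp add: C_def)
  have cf: "continuous_on UNIV f"
    using df by (simp add: differentiable_imp_continuous_on differentiable_on_def)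
  have cfs: "continuous_on UNIV (\<lambda>t. f (p t + s *\<^sub>R v t))" for s
    by (rule continuous_on_compose2[OF cf]) (auto intro!: continuous_intros p v)
  have cDf: "continuous_on UNIV Df"
    unfolding Df_def by (rule continuous_on_frechet_derivative_comp[OF df cd p v])
  have remainder: "Q h - Q 0 - h *\<^sub>R cube_integral \<kappa> Df
      = cube_integral \<kappa> (\<lambda>t. f (p t + h *\<^sub>R v t) - f (p t) - h *\<^sub>R Df t)" for h
    using cfs[of 0] cfs[of h] cDf
    by (simp add: Q_def cube_integral_diff[OF pos] cube_integral_cmult scaleR_conv_of_real continuous_intros)
  have "(Q has_vector_derivative cube_integral \<kappa> Df) (at 0)"
    unfolding has_vector_derivative_def has_derivative_at
  proof (intro conjI bounded_linear_scaleR_left metric_LIM_I)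
    fix r :: real
    assume "r > 0"
    define e where "e = r / (2 * (C + 1))"
    have "e > 0" "e * C < r"
      using \<open>r > 0\<close> \<open>C \<ge> 0\<close> by (auto simp: e_def field_simps add_nonneg_pos)
    obtain d where "d > 0" and d: "\<And>h t. \<bar>h\<bar> < d \<Longrightarrow> t \<in> cbox 0 1 \<Longrightarrow>
        norm (f (p t + h *\<^sub>R v t) - f (p t) - h *\<^sub>R Df t) \<le> e * \<bar>h\<bar>"
      using uniform_linearization[OF df cd p v compact_cbox \<open>e > 0\<close>] unfolding Df_def by blast
    show "\<exists>d>0. \<forall>h. h \<noteq> 0 \<and> dist h 0 < d \<longrightarrow>
        dist (norm (Q (0 + h) - Q 0 - h *\<^sub>R cube_integral \<kappa> Df) / norm h) 0 < r"
    proof (intro exI[of _ d] conjI allI impI \<open>d > 0\<close>)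
      fix h :: real
      assume h: "h \<noteq> 0 \<and> dist h 0 < d"
      have "norm (Q h - Q 0 - h *\<^sub>R cube_integral \<kappa> Df) \<le> (e * \<bar>h\<bar>) * C"
        unfolding remainder C_def using h d cfs[of 0] cfs[of h] cDf
        by (intro norm_cube_integral_le pos continuous_intros) auto
      also have "\<dots> < r * \<bar>h\<bar>"
        using \<open>e * C < r\<close> h by (simp add: mult.commute mult.left_commute)
      finally show "dist (norm (Q (0 + h) - Q 0 - h *\<^sub>R cube_integral \<kappa> Df) / norm h) 0 < r"
        using h by (simp add: divide_less_eq)
    qed
  qed
  then show ?thesis
    unfolding Q_def[abs_def] Df_def[abs_def] .
qed

text \<open>The integrand is the derivative of \<open>(1 - y) powr k * (f (A + y e) - f A)\<close>, which vanishes
  at both ends of \<open>[0, 1]\<close>.\<close>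

lemma weight_factor_integration_by_parts:
  fixes f :: "'a::real_normed_vector \<Rightarrow> complex" and k :: complex
  assumes df: "\<And>y. f differentiable (at y)" and k: "Re k > 0"
  shows "(LINT y|lborel. indicator {0..1} y *\<^sub>R
     (((1 - of_real y) * frechet_derivative f (at (A + y *\<^sub>R e)) e - k * (f (A + y *\<^sub>R e) - f A))
       * weight_factor k y)) = 0"
proof -
  define g where "g y = ((1 - of_real y) * frechet_derivative f (at (A + y *\<^sub>R e)) e
      - k * (f (A + y *\<^sub>R e) - f A)) * weight_factor k y" for y :: real
  define \<Psi> where "\<Psi> y = (of_real (1 - y) :: complex) powr k * (f (A + y *\<^sub>R e) - f A)" for y :: real
  have cf: "continuous_on UNIV f"
    using df by (simp add: differentiable_imp_continuous_on differentiable_on_def)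
  have "(g has_integral \<Psi> 1 - \<Psi> 0) {0..1}"
  proof (rule fundamental_theorem_of_calculus_interior)
    show "continuous_on {0..1} \<Psi>"
      unfolding \<Psi>_def using k
      by (intro continuous_intros continuous_on_powr_complex continuous_on_compose2[OF cf]) auto
    fix y :: real
    assume y: "y \<in> {0<..<1}"
    have "((\<lambda>y. (of_real (1 - y) :: complex) powr k) has_vector_derivative
          (-1) * (k * of_real (1 - y) powr (k - 1))) (at y)"
    proof -
      have "((\<lambda>y. (of_real (1 - y) :: complex)) has_vector_derivative -1) (at y)"
        by (auto intro!: derivative_eq_intros)
      moreover have "((\<lambda>z. z powr k) has_field_derivative (k * of_real (1 - y) powr (k - 1)))
          (at (of_real (1 - y)))"
        using y by (intro has_field_derivative_powr) (auto simp: complex_nonpos_Reals_iff)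
      ultimately show ?thesis
        using field_vector_diff_chain_at by (fastforce simp: comp_def)
    qed
    moreover have "((\<lambda>y. f (A + y *\<^sub>R e) - f A) has_vector_derivative
        frechet_derivative f (at (A + y *\<^sub>R e)) e) (at y)"
      using has_vector_derivative_along_line[OF df] by (auto intro!: derivative_eq_intros)
    ultimately have "(\<Psi> has_vector_derivative
        (of_real (1 - y) powr k * frechet_derivative f (at (A + y *\<^sub>R e)) e
         + ((-1) * (k * of_real (1 - y) powr (k - 1))) * (f (A + y *\<^sub>R e) - f A))) (at y)"
      unfolding \<Psi>_def by (rule has_vector_derivative_mult)
    moreover have "(of_real (1 - y) :: complex) powr k = of_real (1 - y) * weight_factor k y"
      using y by (intro powr_eq_mult_weight_factor) simp
    moreover have "(of_real (1 - y) :: complex) powr (k - 1) = weight_factor k y"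
      using y by (intro powr_eq_weight_factor) simp
    ultimately show "(\<Psi> has_vector_derivative g y) (at y)"
      by (simp only:) (simp add: g_def algebra_simps)
  qed simp
  then have "(g has_integral 0) {0..1}"
    by (simp add: \<Psi>_def)
  then show ?thesis
    using set_borel_integral_eq_integral(2)[of "{0..1}" g] not_integrable_integral_eq[of lborel]
    by (cases "set_integrable lborel {0..1::real} g")
       (auto simp: set_lebesgue_integral_def set_integrable_def g_def integral_unique)
qed

lemma cube_integral_eq_0_if_slices:
  fixes \<kappa> :: "'n::finite \<Rightarrow> complex" and g :: "real^'n \<Rightarrow> complex" and j :: 'n
  assumes pos: "\<And>i. Re (\<kappa> i) > 0" and g: "continuous_on UNIV g"
    and slice: "\<And>c. (LINT y|lborel.
        indicator {0..1} y *\<^sub>R (g (\<chi> k. if k = j then y else c k) * weight_factor (\<kappa> j) y)) = 0"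
  shows "cube_integral \<kappa> g = 0"
proof -
  define K where "K t = indicator (cbox 0 1) t *\<^sub>R (g t * cube_weight \<kappa> t)" for t :: "real^'n"
  define \<phi> where "\<phi> x = (\<Sum>b\<in>(Basis::(real^'n) set). x b *\<^sub>R b)" for x
  define bj where "bj = (axis j 1 :: real^'n)"
  have [measurable]: "g \<in> borel_measurable borel"
    using borel_measurable_continuous_onI[OF g] .
  have [measurable]: "K \<in> borel_measurable borel"
    unfolding K_def by measurable
  have [measurable]: "\<phi> \<in> (\<Pi>\<^sub>M b\<in>Basis. lborel) \<rightarrow>\<^sub>M borel"
    unfolding \<phi>_def by measurable
  have lborel_eq_distr: "(lborel :: (real^'n) measure) = distr (\<Pi>\<^sub>M b\<in>Basis. lborel) borel \<phi>"
    unfolding \<phi>_def by (rule lborel_eq)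
  interpret product_sigma_finite "\<lambda>_::real^'n. lborel"
    by standard
  have int: "integrable (\<Pi>\<^sub>M b\<in>Basis. lborel) (\<lambda>x. K (\<phi> x))"
    using integrable_cube_weighted[of \<kappa>, OF pos g] unfolding lborel_eq_distr K_def[symmetric]
    by (subst (asm) integrable_distr_eq) auto
  have inner: "(LINT y|lborel. K (\<phi> (x(bj := y)))) = 0" for x :: "real^'n \<Rightarrow> real"
  proof -
    define c where "c i = x (axis i 1)" for i
    define C where "C = (if \<forall>i\<in>UNIV - {j}. c i \<in> {0..1}
      then (\<Prod>i\<in>UNIV - {j}. weight_factor (\<kappa> i) (c i)) else 0)"
    have "\<phi> (x(bj := y)) = (\<chi> i. if i = j then y else c i)" for y
      unfolding \<phi>_def vector_cart[symmetric] c_def bj_def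
      by (intro arg_cong[where f=vec_lambda] ext) (simp add: axis_eq_axis)
    moreover have "K (\<chi> i. if i = j then y else c i)
      = C * (indicator {0..1} y *\<^sub>R (g (\<chi> i. if i = j then y else c i) * weight_factor (\<kappa> j) y))" for y
    proof -
      have "cube_weight \<kappa> (\<chi> i. if i = j then y else c i)
          = weight_factor (\<kappa> j) y * (\<Prod>i\<in>UNIV - {j}. weight_factor (\<kappa> i) (c i))"
        unfolding cube_weight_def by (subst prod.remove[of UNIV j]) (auto intro!: prod.cong)
      moreover have "(\<chi> i. if i = j then y else c i) \<in> cbox 0 1
          \<longleftrightarrow> y \<in> {0..1} \<and> (\<forall>i\<in>UNIV - {j}. c i \<in> {0..1})"
        by (auto simp: mem_box_cart split: if_splits)
      ultimately show ?thesis
        by (auto simp: K_def C_def indicator_def)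
    qed
    ultimately have "(LINT y|lborel. K (\<phi> (x(bj := y))))
      = (LINT y|lborel. C * (indicator {0..1} y *\<^sub>R
          (g (\<chi> i. if i = j then y else c i) * weight_factor (\<kappa> j) y)))"
      by simp
    also have "\<dots> = 0"
      using slice[of c] by (simp only: integral_mult_right_zero) simp
    finally show ?thesis .
  qed
  have "cube_integral \<kappa> g = integral\<^sup>L (distr (\<Pi>\<^sub>M b\<in>Basis. lborel) borel \<phi>) K"
    by (simp add: cube_integral_def K_def[abs_def] flip: lborel_eq_distr)
  also have "\<dots> = (LINT x|(\<Pi>\<^sub>M b\<in>Basis. lborel). K (\<phi> x))"
    by (rule integral_distr) measurable
  also have "\<dots> = (LINT x|(\<Pi>\<^sub>M b\<in>Basis - {bj}. lborel). (LINT y|lborel. K (\<phi> (x(bj := y)))))"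
    using product_integral_insert[of "Basis - {bj}" bj "\<lambda>x. K (\<phi> x)"] int
    by (simp add: insert_absorb bj_def Basis_vec_eq_range_axis)
  also have "\<dots> = 0"
    by (simp add: inner)
  finally show ?thesis .
qed

lemma positive_orthogonal_subsystem_orthogonal:
  assumes "inj \<alpha>" and "positive_orthogonal_subsystem (range \<alpha>) R" and "i \<noteq> k"
  shows "inner (\<alpha> i) (\<alpha> k) = 0"
proof -
  obtain S where S: "orthogonal_subsystem S R" "S = range \<alpha> \<union> uminus ` range \<alpha>"
    and disjoint: "range \<alpha> \<inter> uminus ` range \<alpha> = {}"
    using assms(2) unfolding positive_orthogonal_subsystem_def by blast
  have "\<alpha> k \<noteq> \<alpha> i"
    using assms(1,3) by (metis injD)
  moreover have "\<alpha> k \<noteq> - \<alpha> i"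
    using disjoint by (metis disjoint_iff imageI rangeI)
  ultimately show ?thesis
    using S unfolding orthogonal_subsystem_def by auto
qed

lemma linear_hmap: "linear (hmap \<alpha> t)"
proof -
  have hmap_eq: "hmap \<alpha> t
      = (\<lambda>x. x + (\<Sum>j\<in>UNIV. inner x (\<alpha> j) *\<^sub>R (((t $ j - 1) / (norm (\<alpha> j))\<^sup>2) *\<^sub>R \<alpha> j)))"
    by (simp add: hmap_def fun_eq_iff mult.commute)
  show ?thesis
    unfolding hmap_eq by (intro bounded_linear.linear bounded_linear_intros)
qed

lemma continuous_on_hmap: "continuous_on UNIV (\<lambda>t. hmap \<alpha> t y)"
  unfolding hmap_def divide_inverse by (intro continuous_intros)

lemma hmap_split:
  "hmap \<alpha> t x = x + ((t $ j - 1) * inner x (\<alpha> j) / (norm (\<alpha> j))\<^sup>2) *\<^sub>R \<alpha> j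
     + (\<Sum>k\<in>UNIV - {j}. ((t $ k - 1) * inner x (\<alpha> k) / (norm (\<alpha> k))\<^sup>2) *\<^sub>R \<alpha> k)"
  unfolding hmap_def by (subst sum.remove[of UNIV j]) auto

lemma hmap_tau:
  fixes \<alpha> :: "'n::finite \<Rightarrow> 'a::real_inner"
  assumes orthogonal: "\<And>i k. i \<noteq> k \<Longrightarrow> inner (\<alpha> i) (\<alpha> k) = 0" and "\<alpha> j \<noteq> 0"
  shows "hmap \<alpha> t (tau (\<alpha> j) x) = hmap \<alpha> (\<chi> k. if k = j then 0 else t $ k) x"
proof -
  have "inner (tau (\<alpha> j) x) (\<alpha> k) = (if k = j then 0 else inner x (\<alpha> k))" for k
    using assms orthogonal[of j k]
    by (auto simp: tau_def inner_diff_left simp flip: power2_norm_eq_inner)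
  then show ?thesis
    by (simp add: hmap_split[of _ _ _ j] tau_def)
qed

lemma hmap_update_coordinate:
  "hmap \<alpha> (\<chi> k. if k = j then y else c k) x
     = hmap \<alpha> (\<chi> k. if k = j then 0 else c k) x + y *\<^sub>R ((inner x (\<alpha> j) / (norm (\<alpha> j))\<^sup>2) *\<^sub>R \<alpha> j)"
  by (simp add: hmap_split[of _ _ _ j] algebra_simps diff_divide_distrib flip: scaleR_add_left)

lemma chi_eq_cube_integral:
  assumes "\<And>j. Re (\<kappa> j) > 0" and "continuous_on UNIV g"
  shows "chi \<kappa> \<alpha> g y = 1 / (\<Prod>j\<in>UNIV. Gamma (\<kappa> j)) * cube_integral \<kappa> (\<lambda>t. g (hmap \<alpha> t y))"
  unfolding chi_def
  using assms by (subst integral_weight_eq_cube_integral)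
    (auto intro: continuous_on_compose2[OF _ continuous_on_hmap])

locale orthogonal_Dunkl_data =
  fixes \<alpha> :: "'n::finite \<Rightarrow> 'a::euclidean_space" and \<kappa> :: "'n \<Rightarrow> complex" and f :: "'a \<Rightarrow> complex"
  assumes orthogonal: "\<And>i k. i \<noteq> k \<Longrightarrow> inner (\<alpha> i) (\<alpha> k) = 0"
    and nonzero: "\<And>j. \<alpha> j \<noteq> 0"
    and Re_pos: "\<And>j. Re (\<kappa> j) > 0"
    and differentiable: "\<And>y. f differentiable (at y)"
    and continuous_derivative: "\<And>w. continuous_on UNIV (\<lambda>y. frechet_derivative f (at y) w)"
begin

lemma continuous_on_f: "continuous_on UNIV f"
  using differentiable by (simp add: differentiable_imp_continuous_on differentiable_on_def)

lemma continuous_on_hmap_comp: "continuous_on UNIV (\<lambda>t. f (hmap \<alpha> t x))"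
  by (rule continuous_on_compose2[OF continuous_on_f continuous_on_hmap]) simp

lemma continuous_on_derivative_hmap:
  "continuous_on UNIV (\<lambda>t. frechet_derivative f (at (hmap \<alpha> t x)) w)"
  by (rule continuous_on_frechet_derivative_comp[OF differentiable continuous_derivative
      continuous_on_hmap continuous_on_const])

text \<open>Integration by parts in \<open>t $ j\<close>: by \<open>hmap_tau\<close> the boundary value at \<open>t $ j = 0\<close> is the
  integrand at \<open>tau (\<alpha> j) x\<close>.\<close>

lemma cube_integral_tau_difference:
  "\<kappa> j * (cube_integral \<kappa> (\<lambda>t. f (hmap \<alpha> t x)) - cube_integral \<kappa> (\<lambda>t. f (hmap \<alpha> t (tau (\<alpha> j) x))))
   = of_real (inner x (\<alpha> j) / (norm (\<alpha> j))\<^sup>2) *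
     cube_integral \<kappa> (\<lambda>t. (1 - of_real (t $ j)) * frechet_derivative f (at (hmap \<alpha> t x)) (\<alpha> j))"
proof -
  define u where "u = inner x (\<alpha> j) / (norm (\<alpha> j))\<^sup>2"
  define F where "F y t = f (hmap \<alpha> t y)" for y t
  define P where "P t = (1 - of_real (t $ j)) * frechet_derivative f (at (hmap \<alpha> t x)) (u *\<^sub>R \<alpha> j)" for t
  have F: "continuous_on UNIV (F y)" for y
    unfolding F_def by (rule continuous_on_hmap_comp)
  have P: "continuous_on UNIV P"
    unfolding P_def by (intro continuous_intros continuous_on_derivative_hmap)
  have by_parts: "cube_integral \<kappa> (\<lambda>t. P t - \<kappa> j * (F x t - F (tau (\<alpha> j) x) t)) = 0"
  proof (rule cube_integral_eq_0_if_slices[where j = j, OF Re_pos])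
    show "continuous_on UNIV (\<lambda>t. P t - \<kappa> j * (F x t - F (tau (\<alpha> j) x) t))"
      by (intro continuous_on_diff P continuous_on_mult_left F)
    fix c :: "'n \<Rightarrow> real"
    define A where "A = hmap \<alpha> (\<chi> k. if k = j then 0 else c k) x"
    have "hmap \<alpha> (\<chi> k. if k = j then y else c k) x = A + y *\<^sub>R (u *\<^sub>R \<alpha> j)" for y
      unfolding A_def u_def by (rule hmap_update_coordinate)
    moreover have "hmap \<alpha> (\<chi> k. if k = j then y else c k) (tau (\<alpha> j) x) = A" for y
      using hmap_tau[of \<alpha>, OF orthogonal nonzero] by (simp add: A_def cong: if_cong)
    ultimately show "(LINT y|lborel. indicator {0..1} y *\<^sub>R
        ((P (\<chi> k. if k = j then y else c k) - \<kappa> j * (F x (\<chi> k. if k = j then y else c k)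
          - F (tau (\<alpha> j) x) (\<chi> k. if k = j then y else c k))) * weight_factor (\<kappa> j) y)) = 0"
      using weight_factor_integration_by_parts[OF differentiable Re_pos[of j], of A "u *\<^sub>R \<alpha> j"]
      by (simp add: P_def F_def)
  qed
  have "cube_integral \<kappa> (\<lambda>t. P t - \<kappa> j * (F x t - F (tau (\<alpha> j) x) t))
      = cube_integral \<kappa> P - \<kappa> j * (cube_integral \<kappa> (F x) - cube_integral \<kappa> (F (tau (\<alpha> j) x)))"
    by (subst cube_integral_diff[OF Re_pos P]) (intro continuous_on_diff continuous_on_mult_left F,
        simp add: cube_integral_cmult cube_integral_diff[OF Re_pos F F])
  with by_parts have "\<kappa> j * (cube_integral \<kappa> (F x) - cube_integral \<kappa> (F (tau (\<alpha> j) x)))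
      = cube_integral \<kappa> P"
    by simp
  also have "\<dots> = cube_integral \<kappa>
      (\<lambda>t. of_real u * ((1 - of_real (t $ j)) * frechet_derivative f (at (hmap \<alpha> t x)) (\<alpha> j)))"
    unfolding P_def using linear_frechet_derivative[OF differentiable]
    by (simp add: linear_scale scaleR_conv_of_real mult.left_commute)
  also have "\<dots> = of_real u *
      cube_integral \<kappa> (\<lambda>t. (1 - of_real (t $ j)) * frechet_derivative f (at (hmap \<alpha> t x)) (\<alpha> j))"
    by (rule cube_integral_cmult)
  finally show ?thesis
    unfolding F_def[abs_def] u_def .
qed

lemma cube_integral_derivative_hmap:
  "cube_integral \<kappa> (\<lambda>t. frechet_derivative f (at (hmap \<alpha> t x)) (hmap \<alpha> t \<xi>))
   = cube_integral \<kappa> (\<lambda>t. frechet_derivative f (at (hmap \<alpha> t x)) \<xi>)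
     - (\<Sum>j\<in>UNIV. of_real (inner \<xi> (\<alpha> j) / (norm (\<alpha> j))\<^sup>2) *
         cube_integral \<kappa> (\<lambda>t. (1 - of_real (t $ j)) * frechet_derivative f (at (hmap \<alpha> t x)) (\<alpha> j)))"
proof -
  define c where "c j = inner \<xi> (\<alpha> j) / (norm (\<alpha> j))\<^sup>2" for j
  define P where "P j t = (1 - of_real (t $ j)) * frechet_derivative f (at (hmap \<alpha> t x)) (\<alpha> j)" for j t
  have P: "continuous_on UNIV (P j)" for j
    unfolding P_def by (intro continuous_intros continuous_on_derivative_hmap)
  have "frechet_derivative f (at (hmap \<alpha> t x)) (hmap \<alpha> t \<xi>)
      = frechet_derivative f (at (hmap \<alpha> t x)) \<xi> - (\<Sum>j\<in>UNIV. of_real (c j) * P j t)" for t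
  proof -
    have "((t $ j - 1) * inner \<xi> (\<alpha> j) / (norm (\<alpha> j))\<^sup>2) *\<^sub>R frechet_derivative f (at (hmap \<alpha> t x)) (\<alpha> j)
        = - (of_real (c j) * P j t)" for j
      by (simp add: c_def P_def scaleR_conv_of_real algebra_simps diff_divide_distrib)
    then show ?thesis
      using linear_frechet_derivative[OF differentiable]
      by (simp add: hmap_def linear_add linear_sum linear_scale sum_negf)
  qed
  then have "cube_integral \<kappa> (\<lambda>t. frechet_derivative f (at (hmap \<alpha> t x)) (hmap \<alpha> t \<xi>))
      = cube_integral \<kappa> (\<lambda>t. frechet_derivative f (at (hmap \<alpha> t x)) \<xi>)
        - cube_integral \<kappa> (\<lambda>t. \<Sum>j\<in>UNIV. of_real (c j) * P j t)"
    using P by (simp add: cube_integral_diff[OF Re_pos] continuous_on_derivative_hmap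
        continuous_on_sum continuous_on_mult_left)
  also have "cube_integral \<kappa> (\<lambda>t. \<Sum>j\<in>UNIV. of_real (c j) * P j t)
      = (\<Sum>j\<in>UNIV. of_real (c j) * cube_integral \<kappa> (P j))"
    using P by (simp add: cube_integral_sum[OF Re_pos] cube_integral_cmult continuous_on_mult_left)
  finally show ?thesis
    unfolding c_def P_def .
qed

lemma chi_eq: "chi \<kappa> \<alpha> f y = 1 / (\<Prod>j\<in>UNIV. Gamma (\<kappa> j)) * cube_integral \<kappa> (\<lambda>t. f (hmap \<alpha> t y))"
  using chi_eq_cube_integral[OF Re_pos continuous_on_f] .

lemma has_dir_deriv_chi:
  "has_dir_deriv (chi \<kappa> \<alpha> f) \<xi> x (1 / (\<Prod>j\<in>UNIV. Gamma (\<kappa> j)) *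
     cube_integral \<kappa> (\<lambda>t. frechet_derivative f (at (hmap \<alpha> t x)) (hmap \<alpha> t \<xi>)))"
proof -
  have "((\<lambda>s. cube_integral \<kappa> (\<lambda>t. f (hmap \<alpha> t x + s *\<^sub>R hmap \<alpha> t \<xi>))) has_vector_derivative
      cube_integral \<kappa> (\<lambda>t. frechet_derivative f (at (hmap \<alpha> t x)) (hmap \<alpha> t \<xi>))) (at 0)"
    by (rule has_vector_derivative_cube_integral[OF Re_pos differentiable continuous_derivative
          continuous_on_hmap continuous_on_hmap])
  then show ?thesis
    unfolding has_dir_deriv_def chi_eq linear_add[OF linear_hmap] linear_scale[OF linear_hmap]
    by (rule has_vector_derivative_mult_right)
qed

lemma Dunkl_T_chi:
  assumes "\<And>j. inner x (\<alpha> j) \<noteq> 0"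
  shows "\<exists>D. has_dir_deriv (chi \<kappa> \<alpha> f) \<xi> x D \<and>
           Dunkl_T \<kappa> \<alpha> \<xi> (chi \<kappa> \<alpha> f) x D = chi \<kappa> \<alpha> (\<lambda>y. dir_deriv f \<xi> y) x"
proof (intro exI conjI)
  define G where "G = 1 / (\<Prod>j\<in>UNIV. Gamma (\<kappa> j))"
  define P where "P j = cube_integral \<kappa> (\<lambda>t. (1 - of_real (t $ j)) * frechet_derivative f (at (hmap \<alpha> t x)) (\<alpha> j))" for j
  define c where "c j = inner \<xi> (\<alpha> j) / (norm (\<alpha> j))\<^sup>2" for j
  have difference: "\<kappa> j * of_real (inner (\<alpha> j) \<xi>) * (chi \<kappa> \<alpha> f x - chi \<kappa> \<alpha> f (tau (\<alpha> j) x))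
      / of_real (inner x (\<alpha> j)) = G * (of_real (c j) * P j)" for j
  proof -
    have chi_difference: "chi \<kappa> \<alpha> f x - chi \<kappa> \<alpha> f (tau (\<alpha> j) x)
        = G * (cube_integral \<kappa> (\<lambda>t. f (hmap \<alpha> t x)) - cube_integral \<kappa> (\<lambda>t. f (hmap \<alpha> t (tau (\<alpha> j) x))))"
      by (simp add: chi_eq G_def right_diff_distrib)
    have "\<kappa> j * of_real (inner (\<alpha> j) \<xi>) * (chi \<kappa> \<alpha> f x - chi \<kappa> \<alpha> f (tau (\<alpha> j) x))
        / of_real (inner x (\<alpha> j))
        = G * of_real (inner (\<alpha> j) \<xi>) * (\<kappa> j * (cube_integral \<kappa> (\<lambda>t. f (hmap \<alpha> t x))
          - cube_integral \<kappa> (\<lambda>t. f (hmap \<alpha> t (tau (\<alpha> j) x))))) / of_real (inner x (\<alpha> j))"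
      unfolding chi_difference by (simp add: algebra_simps)
    also have "\<dots> = G * of_real (inner (\<alpha> j) \<xi>) * (of_real (inner x (\<alpha> j) / (norm (\<alpha> j))\<^sup>2) * P j)
          / of_real (inner x (\<alpha> j))"
      unfolding cube_integral_tau_difference P_def ..
    also have "\<dots> = G * (of_real (c j) * P j)"
      using assms[of j] by (simp add: c_def inner_commute field_simps)
    finally show ?thesis .
  qed
  show "has_dir_deriv (chi \<kappa> \<alpha> f) \<xi> x
      (G * cube_integral \<kappa> (\<lambda>t. frechet_derivative f (at (hmap \<alpha> t x)) (hmap \<alpha> t \<xi>)))"
    unfolding G_def by (rule has_dir_deriv_chi)
  have "Dunkl_T \<kappa> \<alpha> \<xi> (chi \<kappa> \<alpha> f) x
      (G * cube_integral \<kappa> (\<lambda>t. frechet_derivative f (at (hmap \<alpha> t x)) (hmap \<alpha> t \<xi>)))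
      = G * (cube_integral \<kappa> (\<lambda>t. frechet_derivative f (at (hmap \<alpha> t x)) (hmap \<alpha> t \<xi>))
          + (\<Sum>j\<in>UNIV. of_real (c j) * P j))"
    by (simp add: Dunkl_T_def difference sum_distrib_left distrib_left)
  also have "\<dots> = G * cube_integral \<kappa> (\<lambda>t. frechet_derivative f (at (hmap \<alpha> t x)) \<xi>)"
    by (simp add: cube_integral_derivative_hmap c_def P_def)
  also have "\<dots> = chi \<kappa> \<alpha> (\<lambda>y. dir_deriv f \<xi> y) x"
    by (simp add: G_def dir_deriv_eq_frechet_derivative[OF differentiable]
        chi_eq_cube_integral[OF Re_pos continuous_derivative])
  finally show "Dunkl_T \<kappa> \<alpha> \<xi> (chi \<kappa> \<alpha> f) x
      (G * cube_integral \<kappa> (\<lambda>t. frechet_derivative f (at (hmap \<alpha> t x)) (hmap \<alpha> t \<xi>)))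
      = chi \<kappa> \<alpha> (\<lambda>y. dir_deriv f \<xi> y) x" .
qed

end

theorem theorem4p1:
  fixes R :: "'a::euclidean_space set"
    and \<alpha> :: "'n::finite \<Rightarrow> 'a"
    and \<kappa> :: "'n \<Rightarrow> complex"
    and f :: "'a \<Rightarrow> complex"
    and \<xi> x :: 'a
  assumes "root_system R"
    and "inj \<alpha>"
    and "positive_orthogonal_subsystem (range \<alpha>) R"
    and "\<forall>j. Re (\<kappa> j) > 0"
    and "smooth f"
    and "\<forall>j. inner x (\<alpha> j) \<noteq> 0"
  shows "\<exists>D. has_dir_deriv (chi \<kappa> \<alpha> f) \<xi> x D \<and>
           Dunkl_T \<kappa> \<alpha> \<xi> (chi \<kappa> \<alpha> f) x D = chi \<kappa> \<alpha> (\<lambda>y. dir_deriv f \<xi> y) x"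
proof -
  have "C_k (Suc 0) f"
    using \<open>smooth f\<close> unfolding smooth_def by blast
  then have "f differentiable (at y)" "continuous_on UNIV (\<lambda>y. frechet_derivative f (at y) w)" for y w
    by (simp_all add: differentiable_on_def)
  moreover have "inner (\<alpha> i) (\<alpha> k) = 0" if "i \<noteq> k" for i k
    using positive_orthogonal_subsystem_orthogonal[OF assms(2,3) that] .
  moreover have "\<alpha> j \<noteq> 0" for j
    using assms(6) by (metis inner_zero_right)
  ultimately interpret orthogonal_Dunkl_data \<alpha> \<kappa> f
    using assms(4) by unfold_locales auto
  show ?thesis
    using assms(6) by (intro Dunkl_T_chi) auto
qed

end
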